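(* Let $N\ge1$ and define $$p_k=\begin{cases}\tilde n_0,&k=0,\\ \sum_{l=0}^{k}\tilde n_l-k\,\tilde n_{k+1},&k=1,\dots,N-1,\\ -\infty,&k=N.\end{cases}$$ Then for every $k\in\{1,\dots,N\}$ and every $r\in[0,\tilde n_0]$ with $r\ge p_k$, $$d_{(n_0,\dots,n_N)}(r)=d_{(\tilde n_0,\dots,\tilde n_k)}(r).$$
   Context: For a vector $\mathbf n=(n_0,\dots,n_N)$ of positive integers ($N\ge1$), let $\tilde n_0\le\cdots\le\tilde n_N$ be its nondecreasing rearrangement, $n_{\min}=\tilde n_0$, $c_i=1-i+\min_{k'=1,\dots,N}\lfloor(\sum_{l=0}^{k'}\tilde n_l-i)/k'\rfloor$ for $i=1,\dots,n_{\min}$, and $d_{\mathbf n}(k)=\sum_{i=k+1}^{n_{\min}}c_i$ for integers $0\le k\le n_{\min}$; $d_{\mathbf n}(r)$ for real $r\in[0,n_{\min}]$ is the piecewise-linear interpolation of these points. This is the diversity-multiplexing tradeoff of the $(n_0,\dots,n_N)$ Rayleigh product channel $\mathbf y=\sqrt{\mathsf{SNR}/(n_1\cdots n_N)}\mathbf H_1\cdots\mathbf H_N\mathbf x+\mathbf z$ with independent i.i.d. $\mathcal{CN}(0,1)$ matrices $\mathbf H_i\in\mathbb C^{n_{i-1}\times n_i}$. *)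

theory Defs
  imports Complex_Main "HOL-Library.Extended_Real"
begin

text \<open>A vector n = (n_0,...,n_N) is represented as a list of length N+1.
  The nondecreasing rearrangement is sort ns, so tilde n_l = sort ns ! l.\<close>

definition dmt_N :: "nat list \<Rightarrow> nat" where
  "dmt_N ns = length ns - 1"

definition dmt_nmin :: "nat list \<Rightarrow> nat" where
  "dmt_nmin ns = sort ns ! 0"

definition dmt_c :: "nat list \<Rightarrow> nat \<Rightarrow> int" where
  "dmt_c ns i = 1 - int i + Min ((\<lambda>k'. \<lfloor>(real (\<Sum>l=0..k'. sort ns ! l) - real i) / real k'\<rfloor>)
                                  ` {1..dmt_N ns})"

definition dmt_d_nat :: "nat list \<Rightarrow> nat \<Rightarrow> int" where
  "dmt_d_nat ns k = (\<Sum>i=k+1..dmt_nmin ns. dmt_c ns i)"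

definition dmt_d :: "nat list \<Rightarrow> real \<Rightarrow> real" where
  "dmt_d ns r =
     (let k = nat \<lfloor>r\<rfloor> in
      if dmt_nmin ns \<le> k then real_of_int (dmt_d_nat ns (dmt_nmin ns))
      else (1 - (r - real k)) * real_of_int (dmt_d_nat ns k)
           + (r - real k) * real_of_int (dmt_d_nat ns (k + 1)))"

definition dmt_p :: "nat list \<Rightarrow> nat \<Rightarrow> ereal" where
  "dmt_p ns k =
     (if k = 0 then ereal (real (sort ns ! 0))
      else if k < dmt_N ns then
        ereal (real (\<Sum>l=0..k. sort ns ! l) - real k * real (sort ns ! (k + 1)))
      else -\<infinity>)"

end

theory Submission
  imports Defs
begin

(* Write s for the sorted vector and S_j = s_0 + ... + s_j for its prefix
   sums.  The coefficient c_i of (n_0,...,n_N) is a minimum over j = 1..N of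
   floor((S_j - i)/j), while that of the truncated vector (s_0,...,s_k) is the same
   minimum over j = 1..k only.  For k < N the hypothesis r >= p_k says exactly that
   S_k - x < k s_{k+1} for every x > r (for k = N there is nothing to show).  This
   "excess" inequality propagates upwards along the sorted list (S_j - x < j s_{j+1} for
   all j >= k), and whenever it holds at j the mediant inequality gives
   (S_j - x)/j <= (S_{j+1} - x)/(j+1).  Hence the ratios are nondecreasing from j = k on,
   the minimum over 1..N is attained in 1..k, and c_i agrees for the two vectors whenever
   i > r.  Finally d(r) only involves the values d(j) with j >= floor r, i.e. only the
   coefficients c_i with i > r, so the two tradeoff curves coincide at r. *)

definition prefix_sum :: "nat list \<Rightarrow> nat \<Rightarrow> real" where
  "prefix_sum s j = real (\<Sum>l=0..j. s ! l)"

lemma prefix_sum_Suc: "prefix_sum s (Suc j) = prefix_sum s j + real (s ! Suc j)"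
  by (simp add: prefix_sum_def)

lemma prefix_sum_take: "j < m \<Longrightarrow> prefix_sum (take m s) j = prefix_sum s j"
  by (simp add: prefix_sum_def)

lemma mediant_le:
  fixes A a j :: real
  assumes "0 < j" and "A < j * a"
  shows "A / j \<le> (A + a) / (j + 1)"
  using assms by (simp add: field_simps)

lemma excess_propagates:
  assumes "sorted s" and "k \<le> j" and "j + 1 < length s"
    and excess: "prefix_sum s k - x < real k * real (s ! (k + 1))"
  shows "prefix_sum s j - x < real j * real (s ! (j + 1))"
  using assms(2,3)
proof (induction j rule: dec_induct)
  case base
  then show ?case using excess by simp
next
  case (step j)
  have IH: "prefix_sum s j - x < real j * real (s ! (j + 1))"
    using step by simp
  have mono: "s ! (j + 1) \<le> s ! (Suc j + 1)"
    using \<open>sorted s\<close> step.prems by (simp add: sorted_nth_mono)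
  have "prefix_sum s (Suc j) - x < (real j + 1) * real (s ! (j + 1))"
    using IH by (simp add: prefix_sum_Suc algebra_simps)
  also have "\<dots> \<le> (real j + 1) * real (s ! (Suc j + 1))"
    using mono by (intro mult_left_mono) auto
  finally show ?case by (simp add: add.commute)
qed

lemma prefix_ratio_mono:
  assumes "sorted s" and "1 \<le> k" and "k \<le> j" and "j < length s"
    and excess: "prefix_sum s k - x < real k * real (s ! (k + 1))"
  shows "(prefix_sum s k - x) / real k \<le> (prefix_sum s j - x) / real j"
  using assms(3,4)
proof (induction j rule: dec_induct)
  case base
  then show ?case by simp
next
  case (step j)
  have "prefix_sum s j - x < real j * real (s ! Suc j)"
    using excess_propagates[OF \<open>sorted s\<close> step.hyps(1) _ excess] step.prems by simp
  then have "(prefix_sum s j - x) / real j \<le> (prefix_sum s (Suc j) - x) / real (Suc j)"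
    using mediant_le[of "real j" "prefix_sum s j - x" "real (s ! Suc j)"] \<open>1 \<le> k\<close> \<open>k \<le> j\<close>
    by (simp add: prefix_sum_Suc algebra_simps)
  then show ?case using step.IH step.prems by simp
qed

lemma Min_image_initial_segment:
  fixes f :: "nat \<Rightarrow> 'a::linorder"
  assumes "1 \<le> k" and "k \<le> N" and tail: "\<And>j. k \<le> j \<Longrightarrow> j \<le> N \<Longrightarrow> f k \<le> f j"
  shows "Min (f ` {1..N}) = Min (f ` {1..k})"
proof (rule antisym)
  show "Min (f ` {1..N}) \<le> Min (f ` {1..k})"
    using assms(1,2) by (intro Min_antimono) auto
  show "Min (f ` {1..k}) \<le> Min (f ` {1..N})"
  proof (rule Min.boundedI)
    fix y assume "y \<in> f ` {1..N}"
    then obtain j where j: "j \<in> {1..N}" "y = f j" by auto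
    show "Min (f ` {1..k}) \<le> y"
    proof (cases "j \<le> k")
      case True
      then show ?thesis using j by (intro Min_le) auto
    next
      case False
      have "Min (f ` {1..k}) \<le> f k" using assms(1) by (intro Min_le) auto
      also have "\<dots> \<le> f j" using tail False j by auto
      finally show ?thesis using j by simp
    qed
  qed (use assms in auto)
qed

lemma dmt_c_prefix_sum:
  "dmt_c ns i = 1 - int i
     + Min ((\<lambda>j. \<lfloor>(prefix_sum (sort ns) j - real i) / real j\<rfloor>) ` {1..dmt_N ns})"
  by (simp add: dmt_c_def prefix_sum_def)

lemma sort_take_sort: "sort (take m (sort ns)) = take m (sort ns)"
  by (simp add: sorted_sort_id sorted_wrt_take)

lemma dmt_N_take:
  assumes "k \<le> dmt_N ns" and "1 \<le> k"
  shows "dmt_N (take (k + 1) (sort ns)) = k"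
  using assms by (simp add: dmt_N_def)

lemma dmt_nmin_take: "dmt_nmin (take (k + 1) (sort ns)) = dmt_nmin ns"
  by (simp add: dmt_nmin_def sort_take_sort)

lemma dmt_p_below:
  assumes "1 \<le> k" and "k < dmt_N ns" and "dmt_p ns k < ereal x"
  shows "prefix_sum (sort ns) k - x < real k * real (sort ns ! (k + 1))"
  using assms by (simp add: dmt_p_def prefix_sum_def)

lemma dmt_c_take:
  assumes k: "1 \<le> k" "k \<le> dmt_N ns" and above: "dmt_p ns k < ereal (real i)"
  shows "dmt_c ns i = dmt_c (take (k + 1) (sort ns)) i"
proof -
  define s where "s = sort ns"
  define f where "f j = \<lfloor>(prefix_sum s j - real i) / real j\<rfloor>" for j
  have len: "length s = dmt_N ns + 1"
    using k by (simp add: s_def dmt_N_def)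
  have tail: "f k \<le> f j" if "k \<le> j" "j \<le> dmt_N ns" for j
  proof (cases "k = dmt_N ns")
    case True
    then show ?thesis using that by simp
  next
    case False
    then have "prefix_sum s k - real i < real k * real (s ! (k + 1))"
      using dmt_p_below[OF k(1) _ above] k(2) by (simp add: s_def)
    then show ?thesis
      unfolding f_def using prefix_ratio_mono[of s k j] that k(1) len
      by (intro floor_mono) (simp add: s_def)
  qed
  have truncated: "f ` {1..k}
      = (\<lambda>j. \<lfloor>(prefix_sum (sort (take (k + 1) s)) j - real i) / real j\<rfloor>) ` {1..k}"
    by (intro image_cong refl) (simp add: f_def s_def sort_take_sort prefix_sum_take)
  have "Min (f ` {1..dmt_N ns}) = Min (f ` {1..k})"
    using Min_image_initial_segment[of k "dmt_N ns" f] k tail by blast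
  then show ?thesis
    using truncated dmt_N_take[OF k(2,1)]
    by (simp add: dmt_c_prefix_sum f_def s_def)
qed

lemma dmt_d_local:
  assumes "dmt_nmin ms = dmt_nmin ns"
    and "\<And>j. nat \<lfloor>r\<rfloor> \<le> j \<Longrightarrow> dmt_d_nat ms j = dmt_d_nat ns j"
  shows "dmt_d ms r = dmt_d ns r"
proof (cases "dmt_nmin ns \<le> nat \<lfloor>r\<rfloor>")
  case True
  then show ?thesis using assms(1) by (simp add: dmt_d_def dmt_d_nat_def)
next
  case False
  then show ?thesis
    using assms(1) assms(2)[of "nat \<lfloor>r\<rfloor>"] assms(2)[of "nat \<lfloor>r\<rfloor> + 1"]
    by (simp add: dmt_d_def Let_def)
qed

lemma dmt_d_nat_local:
  assumes "dmt_nmin ms = dmt_nmin ns" and "\<And>i. j < i \<Longrightarrow> dmt_c ms i = dmt_c ns i"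
  shows "dmt_d_nat ms j = dmt_d_nat ns j"
  unfolding dmt_d_nat_def using assms by (intro sum.cong) auto

theorem corollary2:
  fixes ns :: "nat list" and N k :: nat and r :: real
  assumes "length ns = N + 1"
    and "N \<ge> 1"
    and "\<forall>x\<in>set ns. x > 0"
    and "1 \<le> k" and "k \<le> N"
    and "0 \<le> r" and "r \<le> real (sort ns ! 0)"
    and "dmt_p ns k \<le> ereal r"
  shows "dmt_d ns r = dmt_d (take (k + 1) (sort ns)) r"
proof -
  have k: "1 \<le> k" "k \<le> dmt_N ns"
    using assms(1,4,5) by (simp_all add: dmt_N_def)
  have c_eq: "dmt_c ns i = dmt_c (take (k + 1) (sort ns)) i" if "nat \<lfloor>r\<rfloor> < i" for i
  proof (rule dmt_c_take[OF k])
    have "r < real i" using that by linarith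
    then show "dmt_p ns k < ereal (real i)" using assms(8) by (simp add: le_less_trans)
  qed
  show ?thesis
  proof (rule dmt_d_local[OF dmt_nmin_take[symmetric]])
    fix j assume "nat \<lfloor>r\<rfloor> \<le> j"
    then show "dmt_d_nat ns j = dmt_d_nat (take (k + 1) (sort ns)) j"
      using c_eq by (intro dmt_d_nat_local[OF dmt_nmin_take[symmetric]]) auto
  qed
qed

end
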